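(* Let $\nu,\nu'$ be slack vectors and let $\Gamma\in\mathbb L_2^\nu$. Assume $\|\nu'\|_\infty\le\frac1{2d}$. (1) If for every edge $ij\in\mathcal E$ we have $\Gamma_i+\nu'_{ij}\in\Sigma_d$ and $\Gamma_j+\nu'_{ji}\in\Sigma_d$, then there exists $\Gamma'\in\mathbb L_2^{\nu'}$ with $\|\Gamma-\Gamma'\|_1\le2\|\nu-\nu'\|_1$. (2) If $\nu=0$, then there exists $\Gamma'\in\mathbb L_2^{\nu'}$ with $\|\Gamma-\Gamma'\|_1\le6d\deg(G)\|\nu'\|_1$.
   Context: Let $G=(\mathcal V,\mathcal E)$ be a graph with $\mathcal V=\{1,\dots,n\}$, edges ordered pairs $ij$, maximum degree $\deg(G)$, and $d\ge1$; $\Sigma_d$ is the probability simplex in $\mathbb R^d$ and $\mathbb 1$ the all-ones vector. A marginal vector $\Gamma$ consists of $\Gamma_i\in\mathbb R^d$ ($i\in\mathcal V$) and $\Gamma_{ij}\in\mathbb R^{d\times d}$ ($ij\in\mathcal E$); $\|\cdot\|_1$ is the sum of absolute values of all entries and $\|\cdot\|_\infty$ the maximum absolute entry. A slack vector $\nu$ consists of vectors $\nu_{ij},\nu_{ji}\in\mathbb R^d$ for each $ij\in\mathcal E$ with $\nu_{ij}^\top\mathbb 1=\nu_{ji}^\top\mathbb 1=0$. The slack polytope is $\mathbb L_2^\nu=\{\Gamma\ge0:\Gamma_i\in\Sigma_d\ \forall i;\ \Gamma_{ij}\mathbb 1=\Gamma_i+\nu_{ij},\ \Gamma_{ij}^\top\mathbb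 1=\Gamma_j+\nu_{ji},\ \mathbb 1^\top\Gamma_{ij}\mathbb 1=1\ \forall ij\in\mathcal E\}$; $\mathbb L_2=\mathbb L_2^0$. *)

theory Defs
  imports Complex_Main
begin

text \<open>Graph: vertices {1..n}; E a set of ordered pairs (i,j), each undirected edge
  listed exactly once in one orientation, no loops.\<close>
definition graph :: "nat \<Rightarrow> (nat \<times> nat) set \<Rightarrow> bool" where
  "graph n E \<longleftrightarrow> E \<subseteq> {1..n} \<times> {1..n} \<and> (\<forall>(i,j)\<in>E. i \<noteq> j \<and> (j,i) \<notin> E)"

definition max_deg :: "nat \<Rightarrow> (nat \<times> nat) set \<Rightarrow> nat" where
  "max_deg n E = Max (insert 0 ((\<lambda>i. card {e\<in>E. fst e = i \<or> snd e = i}) ` {1..n}))"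

definition simplex :: "nat \<Rightarrow> (nat \<Rightarrow> real) \<Rightarrow> bool" where
  "simplex d x \<longleftrightarrow> (\<forall>a<d. 0 \<le> x a) \<and> (\<Sum>a<d. x a) = 1"

definition slack_vec :: "(nat \<times> nat) set \<Rightarrow> nat \<Rightarrow> (nat \<times> nat \<Rightarrow> nat \<Rightarrow> real) \<Rightarrow> bool" where
  "slack_vec E d nu \<longleftrightarrow> (\<forall>(i,j)\<in>E. (\<Sum>a<d. nu (i,j) a) = 0 \<and> (\<Sum>a<d. nu (j,i) a) = 0)"

text \<open>Slack polytope L_2^nu. A marginal vector is a pair (Gn, Ge): Gn i a is entry a of
  Gamma_i, Ge (i,j) a b is entry (a,b) of Gamma_ij.\<close>
definition L2slack :: "nat \<Rightarrow> (nat \<times> nat) set \<Rightarrow> nat \<Rightarrow> (nat \<times> nat \<Rightarrow> nat \<Rightarrow> real)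
    \<Rightarrow> (nat \<Rightarrow> nat \<Rightarrow> real) \<Rightarrow> (nat \<times> nat \<Rightarrow> nat \<Rightarrow> nat \<Rightarrow> real) \<Rightarrow> bool" where
  "L2slack n E d nu Gn Ge \<longleftrightarrow>
     (\<forall>i\<in>{1..n}. \<forall>a<d. 0 \<le> Gn i a) \<and>
     (\<forall>e\<in>E. \<forall>a<d. \<forall>b<d. 0 \<le> Ge e a b) \<and>
     (\<forall>i\<in>{1..n}. simplex d (Gn i)) \<and>
     (\<forall>(i,j)\<in>E.
        (\<forall>a<d. (\<Sum>b<d. Ge (i,j) a b) = Gn i a + nu (i,j) a) \<and>
        (\<forall>b<d. (\<Sum>a<d. Ge (i,j) a b) = Gn j b + nu (j,i) b) \<and>
        (\<Sum>a<d. \<Sum>b<d. Ge (i,j) a b) = 1)"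

definition marg_dist1 :: "nat \<Rightarrow> (nat \<times> nat) set \<Rightarrow> nat
    \<Rightarrow> (nat \<Rightarrow> nat \<Rightarrow> real) \<Rightarrow> (nat \<times> nat \<Rightarrow> nat \<Rightarrow> nat \<Rightarrow> real)
    \<Rightarrow> (nat \<Rightarrow> nat \<Rightarrow> real) \<Rightarrow> (nat \<times> nat \<Rightarrow> nat \<Rightarrow> nat \<Rightarrow> real) \<Rightarrow> real" where
  "marg_dist1 n E d Gn Ge Gn' Ge' =
     (\<Sum>i\<in>{1..n}. \<Sum>a<d. \<bar>Gn i a - Gn' i a\<bar>) +
     (\<Sum>e\<in>E. \<Sum>a<d. \<Sum>b<d. \<bar>Ge e a b - Ge' e a b\<bar>)"

definition slack_norm1 :: "(nat \<times> nat) set \<Rightarrow> nat \<Rightarrow> (nat \<times> nat \<Rightarrow> nat \<Rightarrow> real) \<Rightarrow> real" where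
  "slack_norm1 E d nu = (\<Sum>(i,j)\<in>E. \<Sum>a<d. \<bar>nu (i,j) a\<bar> + \<bar>nu (j,i) a\<bar>)"

definition slack_norminf :: "(nat \<times> nat) set \<Rightarrow> nat \<Rightarrow> (nat \<times> nat \<Rightarrow> nat \<Rightarrow> real) \<Rightarrow> real" where
  "slack_norminf E d nu = Max (insert 0
      ((\<lambda>((i,j),a). \<bar>nu (i,j) a\<bar>) ` (E \<times> {..<d}) \<union> (\<lambda>((i,j),a). \<bar>nu (j,i) a\<bar>) ` (E \<times> {..<d})))"

end

(* Each edge marginal is a coupling, i.e. a nonnegative d x d matrix with given row and column
   sums, and a coupling can be moved to any other marginals of the same total mass at l1 cost at
   most the l1 change of its marginals: shrink every row proportionally to the smaller of its old
   and new sum, and put the removed mass back as the product coupling of the row deficits and the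
   column losses; then do the same for the columns.  For (1) this is applied with the node
   marginals unchanged.  For (2) each node marginal Gamma_i is first mixed with the uniform
   distribution at weight d m_i, where m_i = min (1/(2d)) (l1 mass of the slack vectors nu'_ij
   at i) dominates every slack entry at i; this makes Gamma_i + nu'_ij nonnegative at cost
   2 d m_i, and summing these costs over vertices and edge endpoints gives the degree bound. *)

theory Submission
  imports Defs
begin

definition coupling :: "nat \<Rightarrow> (nat \<Rightarrow> real) \<Rightarrow> (nat \<Rightarrow> real) \<Rightarrow> (nat \<Rightarrow> nat \<Rightarrow> real) \<Rightarrow> bool" where
  "coupling d r c M \<longleftrightarrow> (\<forall>a<d. \<forall>b<d. 0 \<le> M a b)
     \<and> (\<forall>a<d. (\<Sum>b<d. M a b) = r a) \<and> (\<forall>b<d. (\<Sum>a<d. M a b) = c b)"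

lemma coupling_transpose: "coupling d r c M \<Longrightarrow> coupling d c r (\<lambda>b a. M a b)"
  unfolding coupling_def by simp

lemma product_coupling:
  fixes u v :: "nat \<Rightarrow> real"
  assumes u: "\<forall>a<d. 0 \<le> u a" and v: "\<forall>b<d. 0 \<le> v b" and uv: "(\<Sum>a<d. u a) = (\<Sum>b<d. v b)"
  shows "coupling d u v (\<lambda>a b. u a * v b / (\<Sum>a<d. u a))"
proof (cases "(\<Sum>a<d. u a) = 0")
  case True
  then have "\<forall>a<d. u a = 0" and "\<forall>b<d. v b = 0"
    using u v uv sum_nonneg_eq_0_iff[of "{..<d}" u] sum_nonneg_eq_0_iff[of "{..<d}" v] by auto
  then show ?thesis unfolding coupling_def by simp
next
  case False
  have "(\<Sum>b<d. u a * v b / (\<Sum>a<d. u a)) = u a" for a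
    using False uv by (simp flip: sum_divide_distrib sum_distrib_left)
  moreover have "(\<Sum>a<d. u a * v b / (\<Sum>a<d. u a)) = v b" for b
    using False by (simp flip: sum_divide_distrib sum_distrib_right)
  moreover have "0 \<le> (\<Sum>a<d. u a)"
    using u by (auto intro: sum_nonneg)
  ultimately show ?thesis
    using u v unfolding coupling_def by simp
qed

lemma row_scaling:
  fixes M :: "nat \<Rightarrow> nat \<Rightarrow> real"
  assumes M0: "\<forall>a<d. \<forall>b<d. 0 \<le> M a b"
    and t: "\<forall>a<d. 0 \<le> t a \<and> t a \<le> (\<Sum>b<d. M a b)"
  obtains M1 where "\<forall>a<d. \<forall>b<d. 0 \<le> M1 a b \<and> M1 a b \<le> M a b"
    and "\<forall>a<d. (\<Sum>b<d. M1 a b) = t a"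
proof
  define r where "r a = (\<Sum>b<d. M a b)" for a
  \<comment> \<open>where \<open>r a = 0\<close> also \<open>t a = 0\<close>, so the junk value \<open>t a / 0 = 0\<close> is harmless\<close>
  show "\<forall>a<d. \<forall>b<d. 0 \<le> t a / r a * M a b \<and> t a / r a * M a b \<le> M a b"
  proof (intro allI impI conjI)
    fix a b assume "a < d" "b < d"
    have "0 \<le> t a / r a" "t a / r a \<le> 1" using t \<open>a < d\<close> unfolding r_def
      by (auto simp: divide_le_eq_1)
    with M0 \<open>a < d\<close> \<open>b < d\<close> show "0 \<le> t a / r a * M a b" "t a / r a * M a b \<le> M a b"
      by (metis mult_nonneg_nonneg, metis mult_left_le_one_le)
  qed
  have "(\<Sum>b<d. t a / r a * M a b) = t a" if "a < d" for a
    using t that by (cases "r a = 0") (auto simp flip: sum_divide_distrib sum_distrib_left simp: r_def)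
  then show "\<forall>a<d. (\<Sum>b<d. t a / r a * M a b) = t a" by blast
qed

lemma coupling_total:
  assumes "coupling d r c M"
  shows "(\<Sum>a<d. r a) = (\<Sum>a<d. \<Sum>b<d. M a b)" and "(\<Sum>b<d. c b) = (\<Sum>a<d. \<Sum>b<d. M a b)"
  using assms sum.swap[of M "{..<d}" "{..<d}"] unfolding coupling_def by simp_all

lemma coupling_change_rows:
  fixes M :: "nat \<Rightarrow> nat \<Rightarrow> real" and r r' :: "nat \<Rightarrow> real"
  assumes M: "coupling d r c M" and r': "\<forall>a<d. 0 \<le> r' a" and tot: "(\<Sum>a<d. r' a) = (\<Sum>a<d. r a)"
  obtains M' where "coupling d r' c M'"
    and "(\<Sum>a<d. \<Sum>b<d. \<bar>M a b - M' a b\<bar>) \<le> (\<Sum>a<d. \<bar>r a - r' a\<bar>)"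
proof -
  have M0: "\<forall>a<d. \<forall>b<d. 0 \<le> M a b" and rows: "\<forall>a<d. (\<Sum>b<d. M a b) = r a"
    and cols: "\<forall>b<d. (\<Sum>a<d. M a b) = c b"
    using M unfolding coupling_def by auto
  define t where "t a = min (r a) (r' a)" for a
  have "0 \<le> r a" if "a < d" for a
    using M0 rows that sum_nonneg[of "{..<d}" "M a"] by auto
  then have "\<forall>a<d. 0 \<le> t a \<and> t a \<le> (\<Sum>b<d. M a b)"
    using rows r' by (simp add: t_def)
  then obtain M1 where M1: "\<forall>a<d. \<forall>b<d. 0 \<le> M1 a b \<and> M1 a b \<le> M a b"
    and rows1: "\<forall>a<d. (\<Sum>b<d. M1 a b) = t a"
    using row_scaling[OF M0] by blast
  define u where "u a = r' a - t a" for a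
  define v where "v b = (\<Sum>a<d. M a b - M1 a b)" for b
  have removed: "(\<Sum>b<d. v b) = (\<Sum>a<d. r a - t a)"
    unfolding v_def using rows rows1 by (subst sum.swap) (simp add: sum_subtractf)
  have "(\<Sum>a<d. u a) = (\<Sum>b<d. v b)"
    unfolding removed u_def using tot by (simp add: sum_subtractf)
  moreover have "\<forall>a<d. 0 \<le> u a" "\<forall>b<d. 0 \<le> v b"
    using M1 by (auto simp: u_def v_def t_def intro: sum_nonneg)
  ultimately obtain P where P: "coupling d u v P"
    using product_coupling by blast
  show ?thesis
  proof
    show "coupling d r' c (\<lambda>a b. M1 a b + P a b)"
      using M1 rows1 cols P by (auto simp: coupling_def sum.distrib u_def v_def sum_subtractf)
    have "(\<Sum>a<d. \<Sum>b<d. \<bar>M a b - (M1 a b + P a b)\<bar>) \<le> (\<Sum>a<d. \<Sum>b<d. (M a b - M1 a b) + P a b)"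
    proof (intro sum_mono)
      fix a b assume "a \<in> {..<d}" "b \<in> {..<d}"
      then have "0 \<le> M a b - M1 a b" "0 \<le> P a b"
        using M1 P by (auto simp: coupling_def)
      then show "\<bar>M a b - (M1 a b + P a b)\<bar> \<le> (M a b - M1 a b) + P a b"
        by linarith
    qed
    also have "\<dots> = (\<Sum>b<d. v b) + (\<Sum>a<d. u a)"
      using coupling_total(1)[OF P] sum.swap[of "\<lambda>a b. M a b - M1 a b"]
      unfolding v_def by (simp add: sum.distrib)
    also have "\<dots> = (\<Sum>a<d. \<bar>r a - r' a\<bar>)"
      unfolding removed u_def t_def by (simp flip: sum.distrib) (auto intro: sum.cong)
    finally show "(\<Sum>a<d. \<Sum>b<d. \<bar>M a b - (M1 a b + P a b)\<bar>) \<le> (\<Sum>a<d. \<bar>r a - r' a\<bar>)" .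
  qed
qed

lemma coupling_change_marginals:
  fixes M :: "nat \<Rightarrow> nat \<Rightarrow> real" and r c r' c' :: "nat \<Rightarrow> real"
  assumes M: "coupling d r c M" and r': "\<forall>a<d. 0 \<le> r' a" and c': "\<forall>b<d. 0 \<le> c' b"
    and totr: "(\<Sum>a<d. r' a) = (\<Sum>a<d. r a)" and totc: "(\<Sum>b<d. c' b) = (\<Sum>b<d. c b)"
  obtains M' where "coupling d r' c' M'"
    and "(\<Sum>a<d. \<Sum>b<d. \<bar>M a b - M' a b\<bar>) \<le> (\<Sum>a<d. \<bar>r a - r' a\<bar>) + (\<Sum>b<d. \<bar>c b - c' b\<bar>)"
proof -
  obtain M1 where M1: "coupling d r' c M1"
    and dist1: "(\<Sum>a<d. \<Sum>b<d. \<bar>M a b - M1 a b\<bar>) \<le> (\<Sum>a<d. \<bar>r a - r' a\<bar>)"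
    using coupling_change_rows[OF M r' totr] .
  obtain N where N: "coupling d c' r' N"
    and dist2: "(\<Sum>b<d. \<Sum>a<d. \<bar>M1 a b - N b a\<bar>) \<le> (\<Sum>b<d. \<bar>c b - c' b\<bar>)"
    using coupling_change_rows[OF coupling_transpose[OF M1] c' totc] .
  show ?thesis
  proof
    show "coupling d r' c' (\<lambda>a b. N b a)"
      using coupling_transpose[OF N] .
    have "(\<Sum>a<d. \<Sum>b<d. \<bar>M a b - N b a\<bar>)
        \<le> (\<Sum>a<d. \<Sum>b<d. \<bar>M a b - M1 a b\<bar>) + (\<Sum>a<d. \<Sum>b<d. \<bar>M1 a b - N b a\<bar>)"
      by (simp only: sum.distrib[symmetric]) (intro sum_mono, linarith)
    also have "(\<Sum>a<d. \<Sum>b<d. \<bar>M1 a b - N b a\<bar>) = (\<Sum>b<d. \<Sum>a<d. \<bar>M1 a b - N b a\<bar>)"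
      by (rule sum.swap)
    finally show "(\<Sum>a<d. \<Sum>b<d. \<bar>M a b - N b a\<bar>) \<le> (\<Sum>a<d. \<bar>r a - r' a\<bar>) + (\<Sum>b<d. \<bar>c b - c' b\<bar>)"
      using dist1 dist2 by simp
  qed
qed

lemma graph_endpoints:
  assumes "graph n E" and "(i,j) \<in> E"
  shows "i \<in> {1..n}" and "j \<in> {1..n}"
  using assms unfolding graph_def by auto

lemma graph_finite: "graph n E \<Longrightarrow> finite E"
  unfolding graph_def by (rule finite_subset[of E "{1..n} \<times> {1..n}"]) auto

lemma sum_node_plus_slack:
  assumes G: "graph n E" and nu: "slack_vec E d nu" and simplices: "\<forall>i\<in>{1..n}. simplex d (Gn i)"
    and ij: "(i,j) \<in> E"
  shows "(\<Sum>a<d. Gn i a + nu (i,j) a) = 1" and "(\<Sum>b<d. Gn j b + nu (j,i) b) = 1"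
proof -
  have "(\<Sum>a<d. nu (i,j) a) = 0" "(\<Sum>a<d. nu (j,i) a) = 0"
    using nu ij unfolding slack_vec_def by auto
  moreover have "simplex d (Gn i)" "simplex d (Gn j)"
    using simplices graph_endpoints[OF G ij] by auto
  ultimately show "(\<Sum>a<d. Gn i a + nu (i,j) a) = 1" "(\<Sum>b<d. Gn j b + nu (j,i) b) = 1"
    unfolding simplex_def by (simp_all add: sum.distrib)
qed

lemma L2slack_edge_coupling:
  assumes "L2slack n E d nu Gn Ge" and "(i,j) \<in> E"
  shows "coupling d (\<lambda>a. Gn i a + nu (i,j) a) (\<lambda>b. Gn j b + nu (j,i) b) (Ge (i,j))"
    and "(\<Sum>a<d. \<Sum>b<d. Ge (i,j) a b) = 1"
  using assms unfolding L2slack_def coupling_def by fast+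

lemma L2slack_if_couplings:
  assumes G: "graph n E" and nu: "slack_vec E d nu"
    and simplices: "\<forall>i\<in>{1..n}. simplex d (Gn i)"
    and couplings: "\<forall>(i,j)\<in>E. coupling d (\<lambda>a. Gn i a + nu (i,j) a) (\<lambda>b. Gn j b + nu (j,i) b) (Ge (i,j))"
  shows "L2slack n E d nu Gn Ge"
  unfolding L2slack_def
proof (intro conjI)
  show "\<forall>i\<in>{1..n}. \<forall>a<d. 0 \<le> Gn i a"
    using simplices unfolding simplex_def by blast
  show "\<forall>e\<in>E. \<forall>a<d. \<forall>b<d. 0 \<le> Ge e a b"
    using couplings unfolding coupling_def by fast
  have "(\<Sum>a<d. \<Sum>b<d. Ge (i,j) a b) = 1" if "(i,j) \<in> E" for i j
  proof -
    have "(\<Sum>a<d. \<Sum>b<d. Ge (i,j) a b) = (\<Sum>a<d. Gn i a + nu (i,j) a)"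
      using couplings that unfolding coupling_def by auto
    also have "\<dots> = 1"
      by (rule sum_node_plus_slack(1)[OF G nu simplices that])
    finally show ?thesis .
  qed
  then show "\<forall>(i,j)\<in>E. (\<forall>a<d. (\<Sum>b<d. Ge (i,j) a b) = Gn i a + nu (i,j) a)
      \<and> (\<forall>b<d. (\<Sum>a<d. Ge (i,j) a b) = Gn j b + nu (j,i) b) \<and> (\<Sum>a<d. \<Sum>b<d. Ge (i,j) a b) = 1"
    using couplings unfolding coupling_def by auto
qed (use simplices in simp)

lemma exists_L2slack_with_nodes:
  fixes Gn' :: "nat \<Rightarrow> nat \<Rightarrow> real"
  assumes G: "graph n E" and nu': "slack_vec E d nu'" and Gam: "L2slack n E d nu Gn Ge"
    and simplices: "\<forall>i\<in>{1..n}. simplex d (Gn' i)"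
    and pos: "\<forall>(i,j)\<in>E. \<forall>a<d. 0 \<le> Gn' i a + nu' (i,j) a \<and> 0 \<le> Gn' j a + nu' (j,i) a"
  obtains Ge' where "L2slack n E d nu' Gn' Ge'"
    and "marg_dist1 n E d Gn Ge Gn' Ge' \<le> (\<Sum>i\<in>{1..n}. \<Sum>a<d. \<bar>Gn i a - Gn' i a\<bar>)
           + (\<Sum>(i,j)\<in>E. (\<Sum>a<d. \<bar>Gn i a + nu (i,j) a - (Gn' i a + nu' (i,j) a)\<bar>)
                        + (\<Sum>a<d. \<bar>Gn j a + nu (j,i) a - (Gn' j a + nu' (j,i) a)\<bar>))"
proof -
  define err where "err i j = (\<Sum>a<d. \<bar>Gn i a + nu (i,j) a - (Gn' i a + nu' (i,j) a)\<bar>)" for i j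
  define good where "good i j M \<longleftrightarrow>
    coupling d (\<lambda>a. Gn' i a + nu' (i,j) a) (\<lambda>b. Gn' j b + nu' (j,i) b) M
    \<and> (\<Sum>a<d. \<Sum>b<d. \<bar>Ge (i,j) a b - M a b\<bar>) \<le> err i j + err j i" for i j M
  have "\<exists>M. good i j M" if ij: "(i,j) \<in> E" for i j
  proof -
    note Ge = L2slack_edge_coupling(1)[OF Gam ij] and tot = L2slack_edge_coupling(2)[OF Gam ij]
    have totr: "(\<Sum>a<d. Gn' i a + nu' (i,j) a) = (\<Sum>a<d. Gn i a + nu (i,j) a)"
      and totc: "(\<Sum>b<d. Gn' j b + nu' (j,i) b) = (\<Sum>b<d. Gn j b + nu (j,i) b)"
      using sum_node_plus_slack[OF G nu' simplices ij] coupling_total[OF Ge] tot by simp_all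
    have r': "\<forall>a<d. 0 \<le> Gn' i a + nu' (i,j) a" and c': "\<forall>b<d. 0 \<le> Gn' j b + nu' (j,i) b"
      using pos ij by auto
    obtain M where "coupling d (\<lambda>a. Gn' i a + nu' (i,j) a) (\<lambda>b. Gn' j b + nu' (j,i) b) M"
      and "(\<Sum>a<d. \<Sum>b<d. \<bar>Ge (i,j) a b - M a b\<bar>) \<le> err i j + err j i"
      using coupling_change_marginals[OF Ge r' c' totr totc] unfolding err_def by blast
    then show ?thesis
      unfolding good_def by blast
  qed
  then have "\<forall>e\<in>E. \<exists>M. good (fst e) (snd e) M" by auto
  then obtain F where F: "\<forall>e\<in>E. good (fst e) (snd e) (F e)"
    by (auto dest!: bchoice)
  show ?thesis
  proof
    show "L2slack n E d nu' Gn' F"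
      using F unfolding good_def by (intro L2slack_if_couplings[OF G nu' simplices]) auto
    have "(\<Sum>e\<in>E. \<Sum>a<d. \<Sum>b<d. \<bar>Ge e a b - F e a b\<bar>) \<le> (\<Sum>(i,j)\<in>E. err i j + err j i)"
      using F unfolding good_def by (intro sum_mono) auto
    then show "marg_dist1 n E d Gn Ge Gn' F \<le> (\<Sum>i\<in>{1..n}. \<Sum>a<d. \<bar>Gn i a - Gn' i a\<bar>)
           + (\<Sum>(i,j)\<in>E. (\<Sum>a<d. \<bar>Gn i a + nu (i,j) a - (Gn' i a + nu' (i,j) a)\<bar>)
                        + (\<Sum>a<d. \<bar>Gn j a + nu (j,i) a - (Gn' j a + nu' (j,i) a)\<bar>))"
      unfolding marg_dist1_def err_def by simp
  qed
qed

lemma slack_norm1_nonneg: "0 \<le> slack_norm1 E d nu"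
  unfolding slack_norm1_def by (auto intro!: sum_nonneg)

lemma exists_L2slack_same_nodes:
  assumes G: "graph n E" and nu': "slack_vec E d nu'" and Gam: "L2slack n E d nu Gn Ge"
    and shifted: "\<forall>(i,j)\<in>E. simplex d (\<lambda>a. Gn i a + nu' (i,j) a) \<and> simplex d (\<lambda>a. Gn j a + nu' (j,i) a)"
  shows "\<exists>Ge'. L2slack n E d nu' Gn Ge'
           \<and> marg_dist1 n E d Gn Ge Gn Ge' \<le> slack_norm1 E d (\<lambda>e a. nu e a - nu' e a)"
proof -
  have simplices: "\<forall>i\<in>{1..n}. simplex d (Gn i)"
    using Gam unfolding L2slack_def by blast
  have pos: "\<forall>(i,j)\<in>E. \<forall>a<d. 0 \<le> Gn i a + nu' (i,j) a \<and> 0 \<le> Gn j a + nu' (j,i) a"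
    using shifted unfolding simplex_def by auto
  obtain Ge' where "L2slack n E d nu' Gn Ge'"
    and "marg_dist1 n E d Gn Ge Gn Ge' \<le> (\<Sum>i\<in>{1..n}. \<Sum>a<d. \<bar>Gn i a - Gn i a\<bar>)
           + (\<Sum>(i,j)\<in>E. (\<Sum>a<d. \<bar>Gn i a + nu (i,j) a - (Gn i a + nu' (i,j) a)\<bar>)
                        + (\<Sum>a<d. \<bar>Gn j a + nu (j,i) a - (Gn j a + nu' (j,i) a)\<bar>))"
    using exists_L2slack_with_nodes[OF G nu' Gam simplices pos] by blast
  then show ?thesis
    unfolding slack_norm1_def by (auto simp: sum.distrib split_def)
qed

lemma simplex_mix_uniform:
  assumes x: "simplex d x" and t: "0 \<le> t" "real d * t \<le> 1"
  shows "simplex d (\<lambda>a. (1 - real d * t) * x a + t)"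
    and "\<forall>a<d. t \<le> (1 - real d * t) * x a + t"
    and "(\<Sum>a<d. \<bar>x a - ((1 - real d * t) * x a + t)\<bar>) \<le> 2 * real d * t"
proof -
  have x0: "\<forall>a<d. 0 \<le> x a" and x1: "(\<Sum>a<d. x a) = 1"
    using x unfolding simplex_def by auto
  then show "simplex d (\<lambda>a. (1 - real d * t) * x a + t)"
    using t unfolding simplex_def by (simp add: sum.distrib flip: sum_distrib_left)
  show "\<forall>a<d. t \<le> (1 - real d * t) * x a + t"
    using x0 t by simp
  have "(\<Sum>a<d. \<bar>x a - ((1 - real d * t) * x a + t)\<bar>) \<le> (\<Sum>a<d. real d * t * x a + t)"
  proof (rule sum_mono)
    fix a assume "a \<in> {..<d}"
    then have "0 \<le> real d * t * x a" using x0 t by simp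
    then show "\<bar>x a - ((1 - real d * t) * x a + t)\<bar> \<le> real d * t * x a + t"
      using t by (simp add: algebra_simps abs_le_iff)
  qed
  also have "\<dots> = 2 * real d * t"
    using x1 by (simp add: sum.distrib flip: sum_distrib_left)
  finally show "(\<Sum>a<d. \<bar>x a - ((1 - real d * t) * x a + t)\<bar>) \<le> 2 * real d * t" .
qed

lemma abs_slack_le_norminf:
  assumes "finite E" and "(i,j) \<in> E" and "a < d"
  shows "\<bar>nu (i,j) a\<bar> \<le> slack_norminf E d nu" and "\<bar>nu (j,i) a\<bar> \<le> slack_norminf E d nu"
  unfolding slack_norminf_def using assms by (force intro!: Max_ge)+

definition vertex_slack :: "(nat \<times> nat) set \<Rightarrow> nat \<Rightarrow> (nat \<times> nat \<Rightarrow> nat \<Rightarrow> real) \<Rightarrow> nat \<Rightarrow> real" where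
  "vertex_slack E d nu i = (\<Sum>e\<in>E. (if fst e = i then (\<Sum>a<d. \<bar>nu e a\<bar>) else 0)
                                 + (if snd e = i then (\<Sum>a<d. \<bar>nu (prod.swap e) a\<bar>) else 0))"

lemma vertex_slack_nonneg: "0 \<le> vertex_slack E d nu i"
  unfolding vertex_slack_def by (auto intro!: sum_nonneg)

lemma sum_vertex_slack:
  assumes "graph n E"
  shows "(\<Sum>i\<in>{1..n}. vertex_slack E d nu i) = slack_norm1 E d nu"
proof -
  have "(\<Sum>i\<in>{1..n}. vertex_slack E d nu i)
      = (\<Sum>e\<in>E. \<Sum>i\<in>{1..n}. (if fst e = i then (\<Sum>a<d. \<bar>nu e a\<bar>) else 0)
                             + (if snd e = i then (\<Sum>a<d. \<bar>nu (prod.swap e) a\<bar>) else 0))"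
    unfolding vertex_slack_def by (rule sum.swap)
  also have "\<dots> = (\<Sum>e\<in>E. (\<Sum>a<d. \<bar>nu e a\<bar>) + (\<Sum>a<d. \<bar>nu (prod.swap e) a\<bar>))"
    using graph_endpoints[OF assms] by (intro sum.cong) (auto simp: sum.distrib)
  also have "\<dots> = slack_norm1 E d nu"
    unfolding slack_norm1_def by (simp add: sum.distrib split_def prod.swap_def)
  finally show ?thesis .
qed

lemma abs_slack_le_vertex_slack:
  assumes "finite E" and "(i,j) \<in> E" and "a < d"
  shows "\<bar>nu (i,j) a\<bar> \<le> vertex_slack E d nu i" and "\<bar>nu (j,i) a\<bar> \<le> vertex_slack E d nu j"
proof -
  let ?f = "\<lambda>e. (if fst e = i then (\<Sum>a<d. \<bar>nu e a\<bar>) else 0)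
                 + (if snd e = i then (\<Sum>a<d. \<bar>nu (prod.swap e) a\<bar>) else 0)"
  have "\<bar>nu (i,j) a\<bar> \<le> (\<Sum>a<d. \<bar>nu (i,j) a\<bar>)"
    using assms(3) by (intro member_le_sum) auto
  also have "\<dots> \<le> ?f (i,j)"
    by (auto intro: sum_nonneg)
  also have "\<dots> \<le> vertex_slack E d nu i"
    unfolding vertex_slack_def using assms by (intro member_le_sum) (auto intro: sum_nonneg)
  finally show "\<bar>nu (i,j) a\<bar> \<le> vertex_slack E d nu i" .
next
  let ?f = "\<lambda>e. (if fst e = j then (\<Sum>a<d. \<bar>nu e a\<bar>) else 0)
                 + (if snd e = j then (\<Sum>a<d. \<bar>nu (prod.swap e) a\<bar>) else 0)"
  have "\<bar>nu (j,i) a\<bar> \<le> (\<Sum>a<d. \<bar>nu (j,i) a\<bar>)"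
    using assms(3) by (intro member_le_sum) auto
  also have "\<dots> \<le> ?f (i,j)"
    by (auto intro: sum_nonneg)
  also have "\<dots> \<le> vertex_slack E d nu j"
    unfolding vertex_slack_def using assms by (intro member_le_sum) (auto intro: sum_nonneg)
  finally show "\<bar>nu (j,i) a\<bar> \<le> vertex_slack E d nu j" .
qed

lemma degree_le_max_deg:
  assumes "i \<in> {1..n}"
  shows "card {e\<in>E. fst e = i \<or> snd e = i} \<le> max_deg n E"
  unfolding max_deg_def using assms by (intro Max_ge) auto

lemma one_le_max_deg:
  assumes "graph n E" and "E \<noteq> {}"
  shows "1 \<le> max_deg n E"
proof -
  obtain i j where ij: "(i,j) \<in> E"
    using assms(2) by auto
  have "card {e\<in>E. fst e = i \<or> snd e = i} \<ge> 1"
    using graph_finite[OF assms(1)] ij by (auto simp: Suc_le_eq card_gt_0_iff)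
  then show ?thesis
    using degree_le_max_deg[OF graph_endpoints(1)[OF assms(1) ij], of E] by linarith
qed

lemma sum_endpoints_eq_degree_sum:
  assumes "graph n E"
  shows "(\<Sum>e\<in>E. g (fst e) + g (snd e)) = (\<Sum>i\<in>{1..n}. g i * real (card {e\<in>E. fst e = i \<or> snd e = i}))"
proof -
  have "(\<Sum>e\<in>E. g (fst e) + g (snd e)) = (\<Sum>e\<in>E. \<Sum>i\<in>{1..n}. if fst e = i \<or> snd e = i then g i else 0)"
  proof (rule sum.cong)
    fix e assume e: "e \<in> E"
    then have ends: "fst e \<in> {1..n}" "snd e \<in> {1..n}" "fst e \<noteq> snd e"
      using assms graph_endpoints[OF assms, of "fst e" "snd e"] unfolding graph_def by auto
    have "(\<Sum>k\<in>{1..n}. if fst e = k \<or> snd e = k then g k else 0)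
        = (\<Sum>k\<in>{1..n}. (if fst e = k then g k else 0) + (if snd e = k then g k else 0))"
      using ends(3) by (intro sum.cong) auto
    then show "g (fst e) + g (snd e) = (\<Sum>k\<in>{1..n}. if fst e = k \<or> snd e = k then g k else 0)"
      using ends by (simp add: sum.distrib)
  qed simp
  also have "\<dots> = (\<Sum>i\<in>{1..n}. \<Sum>e\<in>E. if fst e = i \<or> snd e = i then g i else 0)"
    by (rule sum.swap)
  also have "\<dots> = (\<Sum>i\<in>{1..n}. g i * real (card {e\<in>E. fst e = i \<or> snd e = i}))"
    using graph_finite[OF assms] by (simp add: sum.If_cases Int_def mult.commute)
  finally show ?thesis .
qed

lemma sum_endpoints_le_max_deg:
  assumes "graph n E" and "\<forall>i\<in>{1..n}. 0 \<le> g i"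
  shows "(\<Sum>e\<in>E. g (fst e) + g (snd e)) \<le> real (max_deg n E) * (\<Sum>i\<in>{1..n}. g i)"
  unfolding sum_endpoints_eq_degree_sum[OF assms(1)] sum_distrib_left
  using assms(2) degree_le_max_deg by (intro sum_mono) (simp add: mult.commute mult_left_mono)

lemma exists_L2slack_near_L2_with_nodes:
  assumes G: "graph n E" and nu': "slack_vec E d nu'" and Gam: "L2slack n E d nu Gn Ge"
    and nu0: "\<forall>e\<in>E. \<forall>a<d. nu e a = 0 \<and> nu (prod.swap e) a = 0"
    and simplices: "\<forall>i\<in>{1..n}. simplex d (Gn' i)"
    and pos: "\<forall>(i,j)\<in>E. \<forall>a<d. 0 \<le> Gn' i a + nu' (i,j) a \<and> 0 \<le> Gn' j a + nu' (j,i) a"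
    and \<delta>: "\<forall>i\<in>{1..n}. (\<Sum>a<d. \<bar>Gn i a - Gn' i a\<bar>) \<le> \<delta> i"
  shows "\<exists>Ge'. L2slack n E d nu' Gn' Ge' \<and> marg_dist1 n E d Gn Ge Gn' Ge'
           \<le> (1 + real (max_deg n E)) * (\<Sum>i\<in>{1..n}. \<delta> i) + slack_norm1 E d nu'"
proof -
  obtain Ge' where L: "L2slack n E d nu' Gn' Ge'"
    and D: "marg_dist1 n E d Gn Ge Gn' Ge' \<le> (\<Sum>i\<in>{1..n}. \<Sum>a<d. \<bar>Gn i a - Gn' i a\<bar>)
           + (\<Sum>(i,j)\<in>E. (\<Sum>a<d. \<bar>Gn i a + nu (i,j) a - (Gn' i a + nu' (i,j) a)\<bar>)
                        + (\<Sum>a<d. \<bar>Gn j a + nu (j,i) a - (Gn' j a + nu' (j,i) a)\<bar>))"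
    using exists_L2slack_with_nodes[OF G nu' Gam simplices pos] by blast
  have endpoint: "(\<Sum>a<d. \<bar>Gn i a + nu p a - (Gn' i a + nu' p a)\<bar>) \<le> \<delta> i + (\<Sum>a<d. \<bar>nu' p a\<bar>)"
    if "i \<in> {1..n}" and "\<forall>a<d. nu p a = 0" for i p
  proof -
    have "(\<Sum>a<d. \<bar>Gn i a + nu p a - (Gn' i a + nu' p a)\<bar>) \<le> (\<Sum>a<d. \<bar>Gn i a - Gn' i a\<bar> + \<bar>nu' p a\<bar>)"
      using that(2) by (intro sum_mono) auto
    moreover have "(\<Sum>a<d. \<bar>Gn i a - Gn' i a\<bar>) \<le> \<delta> i"
      using \<delta> that(1) by blast
    ultimately show ?thesis
      by (simp add: sum.distrib)
  qed
  have "(\<Sum>(i,j)\<in>E. (\<Sum>a<d. \<bar>Gn i a + nu (i,j) a - (Gn' i a + nu' (i,j) a)\<bar>)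
                        + (\<Sum>a<d. \<bar>Gn j a + nu (j,i) a - (Gn' j a + nu' (j,i) a)\<bar>))
      \<le> (\<Sum>(i,j)\<in>E. (\<delta> i + \<delta> j) + ((\<Sum>a<d. \<bar>nu' (i,j) a\<bar>) + (\<Sum>a<d. \<bar>nu' (j,i) a\<bar>)))"
  proof (intro sum_mono, clarify)
    fix i j assume ij: "(i,j) \<in> E"
    then show "(\<Sum>a<d. \<bar>Gn i a + nu (i,j) a - (Gn' i a + nu' (i,j) a)\<bar>)
                 + (\<Sum>a<d. \<bar>Gn j a + nu (j,i) a - (Gn' j a + nu' (j,i) a)\<bar>)
          \<le> (\<delta> i + \<delta> j) + ((\<Sum>a<d. \<bar>nu' (i,j) a\<bar>) + (\<Sum>a<d. \<bar>nu' (j,i) a\<bar>))"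
      using endpoint[OF graph_endpoints(1)[OF G ij], of "(i,j)"]
        endpoint[OF graph_endpoints(2)[OF G ij], of "(j,i)"] nu0 by fastforce
  qed
  also have "\<dots> = (\<Sum>e\<in>E. \<delta> (fst e) + \<delta> (snd e)) + slack_norm1 E d nu'"
    unfolding slack_norm1_def by (simp add: sum.distrib split_def)
  also have "\<dots> \<le> real (max_deg n E) * (\<Sum>i\<in>{1..n}. \<delta> i) + slack_norm1 E d nu'"
  proof -
    have "\<forall>i\<in>{1..n}. 0 \<le> \<delta> i"
      using \<delta> order_trans[OF sum_nonneg] by (meson abs_ge_zero)
    then show ?thesis
      using sum_endpoints_le_max_deg[OF G] by simp
  qed
  finally show ?thesis
    using L D \<delta> sum_mono[of "{1..n}" "\<lambda>i. \<Sum>a<d. \<bar>Gn i a - Gn' i a\<bar>" \<delta>]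
    by (intro exI[of _ Ge']) (auto simp: algebra_simps)
qed

lemma exists_nodes_absorbing_slack:
  assumes G: "graph n E" and d: "1 \<le> d"
    and simplices: "\<forall>i\<in>{1..n}. simplex d (Gn i)"
    and small: "slack_norminf E d nu \<le> 1 / (2 * real d)"
  obtains Gn' \<delta> where "\<forall>i\<in>{1..n}. simplex d (Gn' i)"
    and "\<forall>(i,j)\<in>E. \<forall>a<d. 0 \<le> Gn' i a + nu (i,j) a \<and> 0 \<le> Gn' j a + nu (j,i) a"
    and "\<forall>i\<in>{1..n}. (\<Sum>a<d. \<bar>Gn i a - Gn' i a\<bar>) \<le> \<delta> i"
    and "(\<Sum>i\<in>{1..n}. \<delta> i) \<le> 2 * real d * slack_norm1 E d nu"
proof -
  define m where "m i = min (1 / (2 * real d)) (vertex_slack E d nu i)" for i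
  define Gn' where "Gn' i a = (1 - real d * m i) * Gn i a + m i" for i a
  have m: "0 \<le> m i" "real d * m i \<le> 1" for i
  proof -
    show "0 \<le> m i"
      unfolding m_def using vertex_slack_nonneg by simp
    have "real d * m i \<le> real d * (1 / (2 * real d))"
      unfolding m_def by (intro mult_left_mono) auto
    then show "real d * m i \<le> 1"
      using d by simp
  qed
  have mix: "simplex d (Gn' i)" "\<forall>a<d. m i \<le> Gn' i a"
    "(\<Sum>a<d. \<bar>Gn i a - Gn' i a\<bar>) \<le> 2 * real d * m i" if "i \<in> {1..n}" for i
    using simplex_mix_uniform[OF bspec[OF simplices that] m] unfolding Gn'_def by simp_all
  have "0 \<le> Gn' i a + nu (i,j) a \<and> 0 \<le> Gn' j a + nu (j,i) a" if ij: "(i,j) \<in> E" "a < d" for i j a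
  proof -
    have "\<bar>nu (i,j) a\<bar> \<le> m i" "\<bar>nu (j,i) a\<bar> \<le> m j"
      using abs_slack_le_vertex_slack[OF graph_finite[OF G] ij, of nu] small
        abs_slack_le_norminf[OF graph_finite[OF G] ij, of nu]
      unfolding m_def by auto
    moreover have "m i \<le> Gn' i a" "m j \<le> Gn' j a"
      using mix(2) graph_endpoints[OF G ij(1)] ij(2) by auto
    ultimately show ?thesis by linarith
  qed
  moreover have "(\<Sum>i\<in>{1..n}. 2 * real d * m i) \<le> 2 * real d * slack_norm1 E d nu"
    unfolding sum_vertex_slack[OF G, symmetric] sum_distrib_left[symmetric] m_def
    by (intro mult_left_mono sum_mono) auto
  ultimately show ?thesis
    using that[of Gn' "\<lambda>i. 2 * real d * m i"] mix by blast
qed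

lemma exists_L2slack_near_L2:
  assumes G: "graph n E" and d: "1 \<le> d" and nu': "slack_vec E d nu'"
    and Gam: "L2slack n E d nu Gn Ge"
    and nu0: "\<forall>e\<in>E. \<forall>a<d. nu e a = 0 \<and> nu (prod.swap e) a = 0"
    and small: "slack_norminf E d nu' \<le> 1 / (2 * real d)"
  shows "\<exists>Gn' Ge'. L2slack n E d nu' Gn' Ge'
           \<and> marg_dist1 n E d Gn Ge Gn' Ge' \<le> 6 * real d * real (max_deg n E) * slack_norm1 E d nu'"
proof -
  define N where "N = slack_norm1 E d nu'"
  define \<Delta> where "\<Delta> = real (max_deg n E)"
  have "\<forall>i\<in>{1..n}. simplex d (Gn i)"
    using Gam unfolding L2slack_def by blast
  then obtain Gn' \<delta> where simplices: "\<forall>i\<in>{1..n}. simplex d (Gn' i)"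
    and pos: "\<forall>(i,j)\<in>E. \<forall>a<d. 0 \<le> Gn' i a + nu' (i,j) a \<and> 0 \<le> Gn' j a + nu' (j,i) a"
    and \<delta>: "\<forall>i\<in>{1..n}. (\<Sum>a<d. \<bar>Gn i a - Gn' i a\<bar>) \<le> \<delta> i"
    and sum_\<delta>: "(\<Sum>i\<in>{1..n}. \<delta> i) \<le> 2 * real d * N"
    using exists_nodes_absorbing_slack[OF G d _ small] unfolding N_def by blast
  obtain Ge' where L: "L2slack n E d nu' Gn' Ge'"
    and D: "marg_dist1 n E d Gn Ge Gn' Ge' \<le> (1 + \<Delta>) * (\<Sum>i\<in>{1..n}. \<delta> i) + N"
    using exists_L2slack_near_L2_with_nodes[OF G nu' Gam nu0 simplices pos \<delta>]
    unfolding N_def \<Delta>_def by blast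
  have "(1 + \<Delta>) * (\<Sum>i\<in>{1..n}. \<delta> i) \<le> (1 + \<Delta>) * (2 * real d * N)"
    using sum_\<delta> by (rule mult_left_mono) (simp add: \<Delta>_def)
  with D have "marg_dist1 n E d Gn Ge Gn' Ge' \<le> (1 + \<Delta>) * (2 * real d * N) + N"
    by linarith
  also have "\<dots> \<le> 6 * real d * \<Delta> * N"
  proof (cases "E = {}")
    case True
    then show ?thesis
      unfolding N_def slack_norm1_def by simp
  next
    case False
    then have "1 \<le> \<Delta>"
      unfolding \<Delta>_def using one_le_max_deg[OF G] by simp
    moreover have "0 \<le> N" "1 \<le> real d"
      unfolding N_def using slack_norm1_nonneg d by auto
    ultimately have "(1 + \<Delta>) * (2 * real d * N) \<le> (2 * \<Delta>) * (2 * real d * N)"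
      and "1 * N \<le> (real d * \<Delta>) * N" and "0 \<le> real d * \<Delta> * N"
      using mult_mono[of 1 "real d" 1 \<Delta>] by (intro mult_right_mono mult_nonneg_nonneg; simp)+
    moreover have "(2 * \<Delta>) * (2 * real d * N) = 4 * (real d * \<Delta> * N)"
      and "6 * real d * \<Delta> * N = 6 * (real d * \<Delta> * N)"
      by (simp_all add: algebra_simps)
    ultimately show ?thesis
      by linarith
  qed
  finally show ?thesis
    using L unfolding N_def \<Delta>_def by blast
qed

theorem lemma7:
  fixes n d :: nat and E :: "(nat \<times> nat) set"
    and nu nu' :: "nat \<times> nat \<Rightarrow> nat \<Rightarrow> real"
    and Gn :: "nat \<Rightarrow> nat \<Rightarrow> real" and Ge :: "nat \<times> nat \<Rightarrow> nat \<Rightarrow> nat \<Rightarrow> real"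
  assumes G: "graph n E" and d: "1 \<le> d"
    and nu: "slack_vec E d nu" and nu': "slack_vec E d nu'"
    and Gam: "L2slack n E d nu Gn Ge"
    and small: "slack_norminf E d nu' \<le> 1 / (2 * real d)"
  shows "((\<forall>(i,j)\<in>E. simplex d (\<lambda>a. Gn i a + nu' (i,j) a) \<and> simplex d (\<lambda>a. Gn j a + nu' (j,i) a))
           \<longrightarrow> (\<exists>Gn' Ge'. L2slack n E d nu' Gn' Ge' \<and>
                 marg_dist1 n E d Gn Ge Gn' Ge' \<le> 2 * slack_norm1 E d (\<lambda>e a. nu e a - nu' e a)))
       \<and> ((\<forall>e\<in>E. \<forall>a<d. nu e a = 0 \<and> nu (prod.swap e) a = 0)
           \<longrightarrow> (\<exists>Gn' Ge'. L2slack n E d nu' Gn' Ge' \<and>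
                 marg_dist1 n E d Gn Ge Gn' Ge' \<le> 6 * real d * real (max_deg n E) * slack_norm1 E d nu'))"
proof (intro conjI impI)
  assume "\<forall>(i,j)\<in>E. simplex d (\<lambda>a. Gn i a + nu' (i,j) a) \<and> simplex d (\<lambda>a. Gn j a + nu' (j,i) a)"
  then obtain Ge' where "L2slack n E d nu' Gn Ge'"
    and "marg_dist1 n E d Gn Ge Gn Ge' \<le> slack_norm1 E d (\<lambda>e a. nu e a - nu' e a)"
    using exists_L2slack_same_nodes[OF G nu' Gam] by blast
  then show "\<exists>Gn' Ge'. L2slack n E d nu' Gn' Ge' \<and>
      marg_dist1 n E d Gn Ge Gn' Ge' \<le> 2 * slack_norm1 E d (\<lambda>e a. nu e a - nu' e a)"
    using slack_norm1_nonneg[of E d "\<lambda>e a. nu e a - nu' e a"] by (intro exI[of _ Gn] exI[of _ Ge']) auto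
next
  assume "\<forall>e\<in>E. \<forall>a<d. nu e a = 0 \<and> nu (prod.swap e) a = 0"
  then show "\<exists>Gn' Ge'. L2slack n E d nu' Gn' Ge' \<and>
      marg_dist1 n E d Gn Ge Gn' Ge' \<le> 6 * real d * real (max_deg n E) * slack_norm1 E d nu'"
    by (rule exists_L2slack_near_L2[OF G d nu' Gam _ small])
qed

end
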